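(* Let $f\in E^{\nu}_{p,q}$ with $p\ge1$, $q\ge2$, written in the corresponding coordinates $x=(\xi,\eta,x_n)$ as $f=x_n^4+2(|\xi|^2-3|\eta|^2)x_n^2+8\xi^\top A_\eta\xi\, x_n+\theta(\xi,\eta)$, and let $\theta_3$ be the part of $\theta$ that is homogeneous of degree $3$ in $\xi$ and degree $1$ in $\eta$. Then $\Delta_\xi\theta_3=0$, where $\Delta_\xi$ is the Laplacian in the $\xi$-variables.
   Context: $f$ is a real homogeneous quartic on $\mathbb{R}^n$ with $|\nabla_x f|^2=16|x|^6$. We say $f\in E^{\nu}_{p,q}$ if there are orthonormal coordinates $x=(\xi,\eta,x_n)$, $\xi\in\mathbb{R}^p$, $\eta\in\mathbb{R}^q$, $p+q=n-1$, in which $f(x)=x_n^4+2(|\xi|^2-3|\eta|^2)x_n^2+8\psi(\xi,\eta)x_n+\theta(\xi,\eta)$ with $\theta$ a homogeneous quartic, $\psi(\xi,\eta)=\xi^\top A_\eta\xi$ where $A_\eta=\sum_{i=1}^q\eta_iA_i$ for symmetric $A_i\in\mathbb{R}^{p\times p}$, and for every $\eta\ne0$ the matrix $A_\eta$ is similar to $|\eta|\,\mathrm{diag}(\mathbf{1}_\nu,-\mathbf{1}_\nu,\mathbf{0}_{p-2\nu})$. *)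

theory Defs
  imports "HOL-Analysis.Analysis"
begin

definition similar_matrix :: "real^'n^'n \<Rightarrow> real^'n^'n \<Rightarrow> bool" where
  "similar_matrix A B \<longleftrightarrow> (\<exists>P. invertible P \<and> A = matrix_inv P ** B ** P)"

definition diagonal_matrix :: "real^'n^'n \<Rightarrow> bool" where
  "diagonal_matrix D \<longleftrightarrow> (\<forall>i j. i \<noteq> j \<longrightarrow> D $ i $ j = 0)"

definition A_eta :: "('q::finite \<Rightarrow> real^'p^'p) \<Rightarrow> real^'q \<Rightarrow> real^'p^'p" where
  "A_eta A \<eta> = (\<Sum>i\<in>UNIV. (\<eta> $ i) *\<^sub>R A i)"

definition joint :: "real^'p \<Rightarrow> real^'q \<Rightarrow> ('p + 'q) \<Rightarrow> real" where
  "joint \<xi> \<eta> a = (case a of Inl i \<Rightarrow> \<xi> $ i | Inr j \<Rightarrow> \<eta> $ j)"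

text \<open>A general homogeneous quartic form on R^p x R^q, given by a coefficient tensor.\<close>
definition quartic_form ::
  "(('p::finite + 'q::finite) \<Rightarrow> ('p + 'q) \<Rightarrow> ('p + 'q) \<Rightarrow> ('p + 'q) \<Rightarrow> real)
   \<Rightarrow> real^'p \<Rightarrow> real^'q \<Rightarrow> real" where
  "quartic_form C \<xi> \<eta> = (\<Sum>a\<in>UNIV. \<Sum>b\<in>UNIV. \<Sum>c\<in>UNIV. \<Sum>d\<in>UNIV.
      C a b c d * joint \<xi> \<eta> a * joint \<xi> \<eta> b * joint \<xi> \<eta> c * joint \<xi> \<eta> d)"

definition n_eta :: "('p + 'q) list \<Rightarrow> nat" where
  "n_eta xs = length (filter (\<lambda>a. \<not> isl a) xs)"

definition part31 ::
  "(('p::finite + 'q::finite) \<Rightarrow> ('p + 'q) \<Rightarrow> ('p + 'q) \<Rightarrow> ('p + 'q) \<Rightarrow> real)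
   \<Rightarrow> real^'p \<Rightarrow> real^'q \<Rightarrow> real" where
  "part31 C \<xi> \<eta> = (\<Sum>a\<in>UNIV. \<Sum>b\<in>UNIV. \<Sum>c\<in>UNIV. \<Sum>d\<in>UNIV.
      (if n_eta [a, b, c, d] = 1 then
        C a b c d * joint \<xi> \<eta> a * joint \<xi> \<eta> b * joint \<xi> \<eta> c * joint \<xi> \<eta> d
       else 0))"

definition laplacian :: "(real^'p::finite \<Rightarrow> real) \<Rightarrow> real^'p \<Rightarrow> real" where
  "laplacian g \<xi> = (\<Sum>i\<in>UNIV. deriv (deriv (\<lambda>r. g (\<xi> + r *\<^sub>R axis i 1))) 0)"

end

(*
  Split \<theta> = \<vartheta>\<^sub>0 + ... + \<vartheta>\<^sub>4 with \<vartheta>\<^sub>k homogeneous of degree k in \<eta>, so that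
  \<theta>\<^sub>3 = \<vartheta>\<^sub>1. The eikonal equation is a polynomial identity in x\<^sub>n; its coefficients of
  x\<^sub>n\<^sup>0, x\<^sub>n\<^sup>1, x\<^sub>n\<^sup>2, evaluated at (\<xi>, m \<eta>) and expanded in m, determine \<vartheta>\<^sub>0 and \<vartheta>\<^sub>2,
  give \<vartheta>\<^sub>3 = 0, and yield two facts on the \<xi>-gradient of \<vartheta>\<^sub>1: it is orthogonal to
  A\<^sub>\<eta> \<xi>, and it vanishes on ker A\<^sub>\<eta>.

  Let S be the polarisation of \<vartheta>\<^sub>1(-, \<eta>) and B = A\<^sub>\<eta> / |\<eta>|, so that B\<^sup>3 = B. The first
  fact reads S(B x, x, x) = 0, which after polarisation gives S(u, u, -) = 0 for eigenvectors
  u of B with eigenvalue \<plusminus>1; the second gives S(-, z, z) = 0 for z \<in> ker B. The Laplacian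
  of \<vartheta>\<^sub>1 is the trace of S in its first two arguments; splitting it along the orthogonal
  eigenspace decomposition of B, the diagonal blocks vanish by these two facts and the
  off-diagonal blocks because the eigenspaces are orthogonal.
*)

theory Submission
  imports Defs
begin

lemma scaleR_matrix_vector_mult: "((c::real) *\<^sub>R (M::real^'n^'m)) *v x = c *\<^sub>R (M *v x)"
  by (simp add: matrix_vector_mult_def vec_eq_iff sum_distrib_left mult.assoc)

lemma symmetric_matrix_entry:
  assumes "transpose M = M"
  shows "M $ j $ i = M $ i $ j"
  using arg_cong[OF assms, of "\<lambda>M. M $ i $ j"] by (simp add: transpose_def)

lemma inner_symmetric_matrix:
  assumes "transpose M = (M::real^'n^'n)"
  shows "x \<bullet> (M *v y) = y \<bullet> (M *v x)"
  by (metis assms dot_lmul_matrix inner_commute transpose_transpose vector_transpose_matrix)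

lemma diagonal_matrix_vector_mult:
  assumes "diagonal_matrix D"
  shows "(D *v y) $ i = D $ i $ i * y $ i"
proof -
  have "(D *v y) $ i = (\<Sum>j\<in>UNIV. D $ i $ j * y $ j)"
    by (simp add: matrix_vector_mult_def)
  also have "\<dots> = (\<Sum>j\<in>UNIV. if j = i then D $ i $ i * y $ i else 0)"
    using assms by (intro sum.cong) (auto simp: diagonal_matrix_def)
  finally show ?thesis
    by simp
qed

lemma similar_diagonal_cube:
  fixes M D :: "real^'n::finite^'n"
  assumes "diagonal_matrix D" and "\<forall>i. D $ i $ i \<in> {l, - l, 0}" and "similar_matrix M D"
  shows "M *v (M *v (M *v x)) = l^2 *\<^sub>R (M *v x)"
proof -
  obtain P where P: "invertible P" and M_eq: "M = matrix_inv P ** D ** P"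
    using assms(3) unfolding similar_matrix_def by blast
  from P have "P ** matrix_inv P = mat 1 \<and> matrix_inv P ** P = mat 1"
    unfolding invertible_def matrix_inv_def by (rule someI_ex)
  then have PQ: "P *v (matrix_inv P *v y) = y" for y
    by (simp add: matrix_vector_mul_assoc)
  have M_apply: "M *v y = matrix_inv P *v (D *v (P *v y))" for y
    by (simp add: M_eq matrix_vector_mul_assoc matrix_mul_assoc)
  have "(D $ i $ i)^3 = l^2 * D $ i $ i" for i
    using assms(2) by (auto simp: power2_eq_square power3_eq_cube)
  then have "D *v (D *v (D *v y)) = l^2 *\<^sub>R (D *v y)" for y
    by (simp add: vec_eq_iff diagonal_matrix_vector_mult[OF assms(1)] power2_eq_square power3_eq_cube
        algebra_simps)
  then show ?thesis
    by (simp add: M_apply PQ matrix_vector_mult_scaleR)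
qed

lemma norm_add_scaleR_sq: "norm (x + s *\<^sub>R v)^2 = norm x^2 + 2 * s * (x \<bullet> v) + s^2 * norm v^2"
  by (simp only: power2_norm_eq_inner) (simp add: inner_add inner_commute algebra_simps power2_eq_square)

lemma norm_quadratic_poly_sq:
  fixes p q r :: "'a::real_inner"
  shows "norm (t^2 *\<^sub>R p + t *\<^sub>R q + r)^2 = t^4 * norm p^2 + t^3 * (2 * (p \<bullet> q))
    + t^2 * (norm q^2 + 2 * (p \<bullet> r)) + t * (2 * (q \<bullet> r)) + norm r^2"
  by (simp only: power2_norm_eq_inner)
    (simp add: inner_add inner_commute algebra_simps power2_eq_square power3_eq_cube power4_eq_xxxx)

lemma norm_cubic_poly_sq:
  fixes a0 a1 a2 a3 :: "'a::real_inner"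
  shows "norm (a0 + m *\<^sub>R a1 + m^2 *\<^sub>R a2 + m^3 *\<^sub>R a3)^2 = norm a0^2 + m * (2 * (a0 \<bullet> a1))
    + m^2 * (norm a1^2 + 2 * (a0 \<bullet> a2)) + m^3 * (2 * (a0 \<bullet> a3) + 2 * (a1 \<bullet> a2))
    + m^4 * (norm a2^2 + 2 * (a1 \<bullet> a3)) + m^5 * (2 * (a2 \<bullet> a3)) + m^6 * norm a3^2"
  by (simp only: power2_norm_eq_inner)
    (simp add: inner_add inner_commute algebra_simps power2_eq_square power3_eq_cube eval_nat_numeral)

lemma poly6_eq_0_imp_coeffs_eq_0:
  fixes c0 c1 c2 c3 c4 c5 c6 :: real
  assumes "\<And>x. c0 + c1 * x + c2 * x^2 + c3 * x^3 + c4 * x^4 + c5 * x^5 + c6 * x^6 = 0"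
  shows "c0 = 0 \<and> c1 = 0 \<and> c2 = 0 \<and> c3 = 0 \<and> c4 = 0 \<and> c5 = 0 \<and> c6 = 0"
proof -
  define c where "c = (\<lambda>i. [c0, c1, c2, c3, c4, c5, c6] ! i)"
  have "\<forall>x. (\<Sum>i\<le>6. c i * x^i) = 0"
    using assms by (simp add: c_def numeral_eq_Suc atMost_Suc algebra_simps)
  then have "\<forall>i\<le>6. c i = 0"
    using polyfun_eq_0 by blast
  then show ?thesis
    unfolding c_def by (auto dest: spec[of _ 0] spec[of _ 1] spec[of _ 2] spec[of _ 3]
      spec[of _ 4] spec[of _ 5] spec[of _ 6] simp: numeral_eq_Suc)
qed

lemma sextic_identity_coeffs:
  fixes \<alpha> \<beta> \<sigma> p0 p1 p2 p3 p4 q0 q1 q2 q3 q4 :: real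
  assumes "\<And>t. (4 * t^3 + \<alpha> * t + \<beta>)^2 + (t^4 * p4 + t^3 * p3 + t^2 * p2 + t * p1 + p0)
    + (t^4 * q4 + t^3 * q3 + t^2 * q2 + t * q1 + q0) = 16 * (\<sigma> + t^2)^3"
  shows "p0 + q0 + \<beta>^2 = 16 * \<sigma>^3" and "p1 + q1 + 2 * \<alpha> * \<beta> = 0"
    and "p2 + q2 + \<alpha>^2 = 48 * \<sigma>^2"
proof -
  have "(p0 + q0 + \<beta>^2 - 16 * \<sigma>^3) + (p1 + q1 + 2 * \<alpha> * \<beta>) * t
    + (p2 + q2 + \<alpha>^2 - 48 * \<sigma>^2) * t^2 + (p3 + q3 + 8 * \<beta>) * t^3
    + (p4 + q4 + 8 * \<alpha> - 48 * \<sigma>) * t^4 + 0 * t^5 + 0 * t^6 = 0" for t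
    using assms[of t] by (simp add: algebra_simps power2_eq_square power3_eq_cube eval_nat_numeral)
  from poly6_eq_0_imp_coeffs_eq_0[OF this]
  show "p0 + q0 + \<beta>^2 = 16 * \<sigma>^3" and "p1 + q1 + 2 * \<alpha> * \<beta> = 0"
    and "p2 + q2 + \<alpha>^2 = 48 * \<sigma>^2"
    by simp_all
qed

lemma has_line_derivative_of_gradient:
  assumes "(f has_derivative (\<lambda>h. g \<bullet> h)) (at x)"
  shows "((\<lambda>s. f (x + s *\<^sub>R h)) has_real_derivative (g \<bullet> h)) (at 0)"
proof -
  have "((f \<circ> (\<lambda>s. x + s *\<^sub>R h)) has_derivative ((\<lambda>h. g \<bullet> h) \<circ> (\<lambda>s. s *\<^sub>R h))) (at 0)"
    by (rule diff_chain_at) (auto intro!: derivative_eq_intros simp: assms)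
  moreover have "(\<lambda>h. g \<bullet> h) \<circ> (\<lambda>s. s *\<^sub>R h) = (*) (g \<bullet> h)"
    by (auto simp: fun_eq_iff)
  ultimately show ?thesis
    by (simp add: has_field_derivative_def o_def)
qed

lemma deriv2_cubic_poly: "deriv (deriv (\<lambda>r::real. a + b * r + c * r^2 + d * r^3)) 0 = 2 * c"
proof -
  have "deriv (\<lambda>r::real. a + b * r + c * r^2 + d * r^3) = (\<lambda>r. b + 2 * c * r + 3 * d * r^2)"
    by (intro ext DERIV_imp_deriv) (auto intro!: derivative_eq_intros simp: power2_eq_square)
  moreover have "deriv (\<lambda>r::real. b + 2 * c * r + 3 * d * r^2) 0 = 2 * c"
    by (rule DERIV_imp_deriv) (auto intro!: derivative_eq_intros)
  ultimately show ?thesis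
    by simp
qed

section \<open>Spectral projections of a matrix with \<open>B\<^sup>3 = B\<close>\<close>

definition tripotent_proj :: "real^'n^'n \<Rightarrow> real \<Rightarrow> real^'n^'n" where
  "tripotent_proj B c = (if c = 0 then mat 1 - B ** B else (1/2) *\<^sub>R (B ** B + c *\<^sub>R B))"

lemma tripotent_proj_apply:
  "tripotent_proj B c *v x =
     (if c = 0 then x - B *v (B *v x) else (1/2) *\<^sub>R (B *v (B *v x) + c *\<^sub>R (B *v x)))"
  by (simp add: tripotent_proj_def scaleR_matrix_vector_mult matrix_vector_mult_add_rdistrib
      matrix_vector_mult_diff_rdistrib flip: matrix_vector_mul_assoc)

lemma transpose_tripotent_proj:
  assumes "transpose B = B"
  shows "transpose (tripotent_proj B c) = tripotent_proj B c"
proof -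
  have "transpose (B ** B) = B ** B"
    by (simp add: matrix_transpose_mul assms)
  then have "(B ** B) $ j $ i = (B ** B) $ i $ j" "B $ j $ i = B $ i $ j" for i j
    using symmetric_matrix_entry assms by blast+
  then show ?thesis
    by (simp add: tripotent_proj_def transpose_def vec_eq_iff mat_def)
qed

context
  fixes B :: "real^'n::finite^'n"
  assumes cube: "\<And>x. B *v (B *v (B *v x)) = B *v x"
begin

lemma tripotent_proj_eigen:
  assumes "c \<in> {-1, 0, 1}"
  shows "B *v (tripotent_proj B c *v x) = c *\<^sub>R (tripotent_proj B c *v x)"
  using assms
  by (auto simp: tripotent_proj_apply matrix_vector_right_distrib matrix_vector_mult_diff_distrib
      matrix_vector_mult_scaleR cube scaleR_add_right add.commute)

lemma tripotent_proj_sum: "(\<Sum>c\<in>{-1, 0, 1}. tripotent_proj B c *v x) = x"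
  by (simp add: tripotent_proj_apply vec_eq_iff algebra_simps)

lemma tripotent_proj_orthogonal:
  assumes "c \<in> {-1, 0, 1}" "d \<in> {-1, 0, 1}" "c \<noteq> d"
  shows "tripotent_proj B c *v (tripotent_proj B d *v x) = 0"
proof -
  define v where "v = tripotent_proj B d *v x"
  have Bv: "B *v v = d *\<^sub>R v"
    using tripotent_proj_eigen[OF assms(2)] by (simp add: v_def)
  then have BBv: "B *v (B *v v) = d^2 *\<^sub>R v"
    by (simp add: matrix_vector_mult_scaleR power2_eq_square)
  show ?thesis
    unfolding v_def[symmetric] tripotent_proj_apply[of B c v] BBv unfolding Bv
    using assms by (auto simp: vec_eq_iff algebra_simps)
qed

end

section \<open>Symmetric trilinear forms\<close>

locale sym_trilinear =
  fixes S :: "real^'n::finite \<Rightarrow> real^'n \<Rightarrow> real^'n \<Rightarrow> real"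
  assumes linear_left: "linear (\<lambda>u. S u v w)"
    and swap12: "S u v w = S v u w"
    and swap23: "S u v w = S u w v"
begin

lemma linear_mid: "linear (\<lambda>v. S u v w)"
  using linear_left[of u w] by (subst swap12) simp

lemma linear_right: "linear (\<lambda>w. S u v w)"
  using linear_mid[of u v] by (subst swap23) simp

lemmas add_left = linear_add[OF linear_left]
  and add_mid = linear_add[OF linear_mid]
  and add_right = linear_add[OF linear_right]
  and diff_left = linear_diff[OF linear_left]
  and diff_mid = linear_diff[OF linear_mid]
  and diff_right = linear_diff[OF linear_right]
  and scaleR_left = linear_scale[OF linear_left]
  and scaleR_mid = linear_scale[OF linear_mid]
  and scaleR_right = linear_scale[OF linear_right]
  and sum_left = linear_sum[OF linear_left]
  and sum_mid = linear_sum[OF linear_mid]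
  and zero_left = linear_0[OF linear_left]

lemma cube_line:
  "S (x + r *\<^sub>R e) (x + r *\<^sub>R e) (x + r *\<^sub>R e) =
     S x x x + (3 * S e x x) * r + (3 * S e e x) * r^2 + S e e e * r^3"
proof -
  have "S x e x = S e x x" "S x x e = S e x x" "S e x e = S e e x" "S x e e = S e e x"
    using swap12 swap23 by metis+
  then show ?thesis
    by (simp add: add_left add_mid add_right scaleR_left scaleR_mid scaleR_right
        algebra_simps power2_eq_square power3_eq_cube)
qed

lemma polarize_first:
  fixes B :: "real^'n^'n"
  assumes "\<And>x. S (B *v x) x x = 0"
  shows "2 * S (B *v x) x y + S (B *v y) x x = 0"
proof -
  have "S (B *v (x + y)) (x + y) (x + y) = 0" "S (B *v (x - y)) (x - y) (x - y) = 0" "S (B *v y) y y = 0"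
    by (rule assms)+
  moreover have "S (B *v x) y x = S (B *v x) x y" "S (B *v y) y x = S (B *v y) x y"
    by (rule swap23)+
  ultimately show ?thesis
    by (simp add: matrix_vector_right_distrib matrix_vector_mult_diff_distrib add_left add_mid add_right
        diff_left diff_mid diff_right)
qed

lemma eigenvector_diag_eq_0:
  fixes B :: "real^'n^'n"
  assumes "\<And>x. S (B *v x) x x = 0"
    and cube: "\<And>x. B *v (B *v (B *v x)) = B *v x"
    and eigen: "B *v u = c *\<^sub>R u" and c: "c = 1 \<or> c = -1"
  shows "S u u y = 0"
proof -
  have shift: "S u u (B *v y) = -2 * c * S u u y" for y
    using polarize_first[OF assms(1), of u y] c
    unfolding eigen scaleR_left
    by (auto simp: swap12[of _ u u] swap23[of "B *v y" u u] swap12[of "B *v y" u] swap23[of u "B *v y"]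
        algebra_simps)
  have "-2 * c * S u u y = S u u (B *v (B *v (B *v y)))"
    by (simp add: cube shift)
  also have "\<dots> = -8 * c^3 * S u u y"
    by (simp add: shift power3_eq_cube)
  finally show ?thesis
    using c by (elim disjE) simp_all
qed

lemma sum_cross_eq_0:
  fixes P Q :: "real^'n^'n"
  assumes Q_symmetric: "transpose Q = Q" and PQ: "\<And>x. P *v (Q *v x) = 0"
  shows "(\<Sum>i\<in>UNIV. S (P *v axis i 1) (Q *v axis i 1) w) = 0"
proof -
  have expand: "(\<Sum>i\<in>UNIV. (x$i) *\<^sub>R axis i 1) = (x::real^'n)" for x
    using basis_expansion[of x] by (simp add: scalar_mult_eq_scaleR)
  have Q_col: "(Q *v axis i 1) $ l = (Q *v axis l 1) $ i" for i l
  proof -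
    have "Q $ l $ i = Q $ i $ l"
      using symmetric_matrix_entry[OF Q_symmetric] .
    then show ?thesis
      by (simp add: matrix_vector_mult_def axis_def if_distrib sum.delta cong: if_cong)
  qed
  have "(\<Sum>i\<in>UNIV. S (P *v axis i 1) (Q *v axis i 1) w)
      = (\<Sum>i\<in>UNIV. \<Sum>l\<in>UNIV. (Q *v axis l 1) $ i * S (P *v axis i 1) (axis l 1) w)"
    by (subst (1) expand[of "Q *v axis _ 1", symmetric]) (simp add: sum_mid scaleR_mid Q_col)
  also have "\<dots> = (\<Sum>l\<in>UNIV. \<Sum>i\<in>UNIV. (Q *v axis l 1) $ i * S (P *v axis i 1) (axis l 1) w)"
    by (rule sum.swap)
  also have "\<dots> = (\<Sum>l\<in>UNIV. S (P *v (Q *v axis l 1)) (axis l 1) w)"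
    by (subst (2) expand[of "Q *v axis _ 1", symmetric])
      (simp add: linear_sum[OF matrix_vector_mul_linear] matrix_vector_mult_scaleR sum_left scaleR_left)
  also have "\<dots> = 0"
    by (simp add: PQ zero_left)
  finally show ?thesis .
qed

lemma trace_eq_0_if_decomposition:
  fixes P :: "'k \<Rightarrow> real^'n^'n"
  assumes "finite K"
    and decomposition: "\<And>x. (\<Sum>k\<in>K. P k *v x) = x"
    and symmetric: "\<And>k. k \<in> K \<Longrightarrow> transpose (P k) = P k"
    and orthogonal: "\<And>k l x. k \<in> K \<Longrightarrow> l \<in> K \<Longrightarrow> k \<noteq> l \<Longrightarrow> P k *v (P l *v x) = 0"
    and diag: "\<And>k x y. k \<in> K \<Longrightarrow> S (P k *v x) (P k *v x) y = 0"
  shows "(\<Sum>i\<in>UNIV. S (axis i 1) (axis i 1) w) = 0"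
proof -
  have "(\<Sum>i\<in>UNIV. S (axis i 1) (axis i 1) w)
      = (\<Sum>i\<in>UNIV. \<Sum>l\<in>K. \<Sum>k\<in>K. S (P k *v axis i 1) (P l *v axis i 1) w)"
    by (subst (1 2) decomposition[symmetric]) (simp add: sum_left sum_mid)
  also have "\<dots> = (\<Sum>l\<in>K. \<Sum>k\<in>K. \<Sum>i\<in>UNIV. S (P k *v axis i 1) (P l *v axis i 1) w)"
    by (simp add: sum.swap[of _ UNIV])
  also have "\<dots> = 0"
  proof (rule sum.neutral, rule ballI, rule sum.neutral, rule ballI)
    fix l k
    assume "l \<in> K" "k \<in> K"
    then show "(\<Sum>i\<in>UNIV. S (P k *v axis i 1) (P l *v axis i 1) w) = 0"
      using diag sum_cross_eq_0[OF symmetric orthogonal] by (cases "k = l") auto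
  qed
  finally show ?thesis .
qed

lemma trace_eq_0_if_tripotent:
  fixes B :: "real^'n^'n"
  assumes B_symmetric: "transpose B = B"
    and cube: "\<And>x. B *v (B *v (B *v x)) = B *v x"
    and image: "\<And>x. S (B *v x) x x = 0"
    and kernel: "\<And>h z. B *v z = 0 \<Longrightarrow> S h z z = 0"
  shows "(\<Sum>i\<in>UNIV. S (axis i 1) (axis i 1) w) = 0"
proof (rule trace_eq_0_if_decomposition[of "{-1, 0, 1}" "tripotent_proj B"])
  show "S (tripotent_proj B c *v x) (tripotent_proj B c *v x) y = 0" if "c \<in> {-1, 0, 1}" for c x y
  proof (cases "c = 0")
    case True
    then show ?thesis
      using kernel tripotent_proj_eigen[OF cube that] swap12 swap23 by (metis scale_zero_left)
  next
    case False
    then show ?thesis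
      using that by (intro eigenvector_diag_eq_0[OF image cube tripotent_proj_eigen[OF cube that]]) auto
  qed
qed (use tripotent_proj_sum[OF cube] tripotent_proj_orthogonal[OF cube]
      transpose_tripotent_proj[OF B_symmetric] in auto)

end

section \<open>The \<open>\<eta>\<close>-homogeneous parts of the quartic form\<close>

definition eta_part ::
  "(('p::finite + 'q::finite) \<Rightarrow> ('p + 'q) \<Rightarrow> ('p + 'q) \<Rightarrow> ('p + 'q) \<Rightarrow> real)
   \<Rightarrow> nat \<Rightarrow> real^'p \<Rightarrow> real^'q \<Rightarrow> real" where
  "eta_part C k \<xi> \<eta> = (\<Sum>a\<in>UNIV. \<Sum>b\<in>UNIV. \<Sum>c\<in>UNIV. \<Sum>d\<in>UNIV.
      (if n_eta [a, b, c, d] = k then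
        C a b c d * joint \<xi> \<eta> a * joint \<xi> \<eta> b * joint \<xi> \<eta> c * joint \<xi> \<eta> d
       else 0))"

definition monomial_deriv ::
  "(('p::finite + 'q::finite) \<Rightarrow> ('p + 'q) \<Rightarrow> ('p + 'q) \<Rightarrow> ('p + 'q) \<Rightarrow> real)
   \<Rightarrow> real^'p \<Rightarrow> real^'q \<Rightarrow> real^'p \<Rightarrow> real^'q
   \<Rightarrow> ('p + 'q) \<Rightarrow> ('p + 'q) \<Rightarrow> ('p + 'q) \<Rightarrow> ('p + 'q) \<Rightarrow> real"
  where
  "monomial_deriv C \<xi> \<eta> h g a b c d = C a b c d *
     (joint h g a * joint \<xi> \<eta> b * joint \<xi> \<eta> c * joint \<xi> \<eta> d
    + joint \<xi> \<eta> a * joint h g b * joint \<xi> \<eta> c * joint \<xi> \<eta> d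
    + joint \<xi> \<eta> a * joint \<xi> \<eta> b * joint h g c * joint \<xi> \<eta> d
    + joint \<xi> \<eta> a * joint \<xi> \<eta> b * joint \<xi> \<eta> c * joint h g d)"

definition quartic_form_deriv where
  "quartic_form_deriv C \<xi> \<eta> h g =
     (\<Sum>a\<in>UNIV. \<Sum>b\<in>UNIV. \<Sum>c\<in>UNIV. \<Sum>d\<in>UNIV. monomial_deriv C \<xi> \<eta> h g a b c d)"

definition eta_part_deriv where
  "eta_part_deriv C k \<xi> \<eta> h g = (\<Sum>a\<in>UNIV. \<Sum>b\<in>UNIV. \<Sum>c\<in>UNIV. \<Sum>d\<in>UNIV.
      (if n_eta [a, b, c, d] = k then monomial_deriv C \<xi> \<eta> h g a b c d else 0))"

definition grad_xi ::
  "(real^'p \<Rightarrow> real^'q \<Rightarrow> real^'p \<Rightarrow> real^'q \<Rightarrow> real) \<Rightarrow> real^'p \<Rightarrow> real^'q \<Rightarrow> real^'p" where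
  "grad_xi D \<xi> \<eta> = (\<chi> i. D \<xi> \<eta> (axis i 1) 0)"

definition grad_eta ::
  "(real^'p \<Rightarrow> real^'q \<Rightarrow> real^'p \<Rightarrow> real^'q \<Rightarrow> real) \<Rightarrow> real^'p \<Rightarrow> real^'q \<Rightarrow> real^'q" where
  "grad_eta D \<xi> \<eta> = (\<chi> j. D \<xi> \<eta> 0 (axis j 1))"

lemma part31_eq_eta_part: "part31 C = eta_part C 1"
  by (simp add: fun_eq_iff part31_def eta_part_def)

lemma joint_line: "joint (\<xi> + s *\<^sub>R h) (\<eta> + s *\<^sub>R g) a = joint \<xi> \<eta> a + s * joint h g a"
  by (cases a) (auto simp: joint_def)

lemma joint_zero [simp]: "joint 0 0 a = 0"
  by (cases a) (auto simp: joint_def)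

lemma quartic_form_has_line_derivative:
  "((\<lambda>s. quartic_form C (\<xi> + s *\<^sub>R h) (\<eta> + s *\<^sub>R g)) has_real_derivative
     quartic_form_deriv C \<xi> \<eta> h g) (at 0)"
  unfolding quartic_form_def quartic_form_deriv_def joint_line
  by (intro DERIV_sum) (auto intro!: derivative_eq_intros simp: monomial_deriv_def algebra_simps)

lemma eta_part_has_line_derivative:
  "((\<lambda>s. eta_part C k (\<xi> + s *\<^sub>R h) (\<eta> + s *\<^sub>R g)) has_real_derivative
     eta_part_deriv C k \<xi> \<eta> h g) (at 0)"
  unfolding eta_part_def eta_part_deriv_def joint_line
  by (intro DERIV_sum) (auto intro!: derivative_eq_intros simp: monomial_deriv_def algebra_simps)

lemma quartic_form_deriv_zero [simp]: "quartic_form_deriv C \<xi> \<eta> 0 0 = 0"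
  by (simp add: quartic_form_deriv_def monomial_deriv_def)

lemma monomial_deriv_scale_eta:
  "monomial_deriv C \<xi> (m *\<^sub>R \<eta>) h 0 a b c d =
     (\<Sum>k<4. m ^ k * (if n_eta [a,b,c,d] = k then monomial_deriv C \<xi> \<eta> h 0 a b c d else 0))"
  "monomial_deriv C \<xi> (m *\<^sub>R \<eta>) 0 g a b c d =
     (\<Sum>k<4. m ^ k * (if n_eta [a,b,c,d] = Suc k then monomial_deriv C \<xi> \<eta> 0 g a b c d else 0))"
  by (cases a; cases b; cases c; cases d;
      simp add: monomial_deriv_def joint_def n_eta_def numeral_eq_Suc algebra_simps)+

lemma grad_quartic_form_deriv_scale_eta:
  "grad_xi (quartic_form_deriv C) \<xi> (m *\<^sub>R \<eta>) =
     grad_xi (eta_part_deriv C 0) \<xi> \<eta> + m *\<^sub>R grad_xi (eta_part_deriv C 1) \<xi> \<eta>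
     + m^2 *\<^sub>R grad_xi (eta_part_deriv C 2) \<xi> \<eta> + m^3 *\<^sub>R grad_xi (eta_part_deriv C 3) \<xi> \<eta>"
  "grad_eta (quartic_form_deriv C) \<xi> (m *\<^sub>R \<eta>) =
     grad_eta (eta_part_deriv C 1) \<xi> \<eta> + m *\<^sub>R grad_eta (eta_part_deriv C 2) \<xi> \<eta>
     + m^2 *\<^sub>R grad_eta (eta_part_deriv C 3) \<xi> \<eta> + m^3 *\<^sub>R grad_eta (eta_part_deriv C 4) \<xi> \<eta>"
  by (simp_all add: vec_eq_iff grad_xi_def grad_eta_def quartic_form_deriv_def eta_part_deriv_def
      monomial_deriv_scale_eta sum_distrib_left sum.swap[of _ "{..<4::nat}"] eval_nat_numeral
      sum.distrib)

lemma joint_expand_xi: "joint h (0::real^'q) a = (\<Sum>i\<in>UNIV. h $ i * joint (axis i 1) (0::real^'q) a)"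
  by (cases a) (simp_all add: joint_def axis_def if_distrib[of "(*) _"] sum.delta cong: if_cong)

lemma joint_expand_eta: "joint (0::real^'p) g a = (\<Sum>j\<in>UNIV. g $ j * joint (0::real^'p) (axis j 1) a)"
  by (cases a) (simp_all add: joint_def axis_def if_distrib[of "(*) _"] sum.delta cong: if_cong)

lemma sum4_swap:
  "(\<Sum>a\<in>X. \<Sum>b\<in>X. \<Sum>c\<in>X. \<Sum>d\<in>X. \<Sum>i\<in>I. F i a b c d) =
   (\<Sum>i\<in>I. \<Sum>a\<in>X. \<Sum>b\<in>X. \<Sum>c\<in>X. \<Sum>d\<in>X. F i a b c d)"
  by (subst sum.swap, subst sum.swap[of _ X], simp only: sum.swap[of _ X I])

lemma eta_part_deriv_xi_linear:
  "eta_part_deriv C k \<xi> \<eta> h 0 = h \<bullet> grad_xi (eta_part_deriv C k) \<xi> \<eta>"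
proof -
  have "(if n_eta [a,b,c,d] = k then monomial_deriv C \<xi> \<eta> h 0 a b c d else 0) =
    (\<Sum>i\<in>UNIV. h $ i * (if n_eta [a,b,c,d] = k then monomial_deriv C \<xi> \<eta> (axis i 1) 0 a b c d else 0))"
    for a b c d
    unfolding monomial_deriv_def joint_expand_xi[of h]
    by (simp add: sum_distrib_left sum_distrib_right sum.distrib algebra_simps)
  then show ?thesis
    unfolding eta_part_deriv_def inner_vec_def grad_xi_def
    by (simp add: sum4_swap sum_distrib_left mult.commute[of "h $ _"])
qed

lemma eta_part_deriv_eta_linear:
  "eta_part_deriv C k \<xi> \<eta> 0 g = g \<bullet> grad_eta (eta_part_deriv C k) \<xi> \<eta>"
proof -
  have "(if n_eta [a,b,c,d] = k then monomial_deriv C \<xi> \<eta> 0 g a b c d else 0) =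
    (\<Sum>i\<in>UNIV. g $ i * (if n_eta [a,b,c,d] = k then monomial_deriv C \<xi> \<eta> 0 (axis i 1) a b c d else 0))"
    for a b c d
    unfolding monomial_deriv_def joint_expand_eta[of g]
    by (simp add: sum_distrib_left sum_distrib_right sum.distrib algebra_simps)
  then show ?thesis
    unfolding eta_part_deriv_def inner_vec_def grad_eta_def
    by (simp add: sum4_swap sum_distrib_left mult.commute[of "g $ _"])
qed

lemma eta_part_euler_xi: "eta_part_deriv C k \<xi> \<eta> \<xi> 0 = (4 - real k) * eta_part C k \<xi> \<eta>"
proof -
  have "(if n_eta [a,b,c,d] = k then monomial_deriv C \<xi> \<eta> \<xi> 0 a b c d else 0) = (4 - real k) *
    (if n_eta [a,b,c,d] = k then C a b c d * joint \<xi> \<eta> a * joint \<xi> \<eta> b * joint \<xi> \<eta> c * joint \<xi> \<eta> d else 0)"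
    for a b c d
    by (cases a; cases b; cases c; cases d) (auto simp: monomial_deriv_def joint_def n_eta_def algebra_simps)
  then show ?thesis
    by (simp add: eta_part_deriv_def eta_part_def sum_distrib_left)
qed

lemma eta_part_euler_eta: "eta_part_deriv C k \<xi> \<eta> 0 \<eta> = real k * eta_part C k \<xi> \<eta>"
proof -
  have "(if n_eta [a,b,c,d] = k then monomial_deriv C \<xi> \<eta> 0 \<eta> a b c d else 0) = real k *
    (if n_eta [a,b,c,d] = k then C a b c d * joint \<xi> \<eta> a * joint \<xi> \<eta> b * joint \<xi> \<eta> c * joint \<xi> \<eta> d else 0)"
    for a b c d
    by (cases a; cases b; cases c; cases d) (auto simp: monomial_deriv_def joint_def n_eta_def algebra_simps)
  then show ?thesis
    by (simp add: eta_part_deriv_def eta_part_def sum_distrib_left)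
qed

lemma inner_grad_xi_eta_part: "\<xi> \<bullet> grad_xi (eta_part_deriv C k) \<xi> \<eta> = (4 - real k) * eta_part C k \<xi> \<eta>"
  using eta_part_deriv_xi_linear[of C k \<xi> \<eta> \<xi>] eta_part_euler_xi[of C k \<xi> \<eta>] by simp

lemma inner_grad_eta_eta_part: "\<eta> \<bullet> grad_eta (eta_part_deriv C k) \<xi> \<eta> = real k * eta_part C k \<xi> \<eta>"
  using eta_part_deriv_eta_linear[of C k \<xi> \<eta> \<eta>] eta_part_euler_eta[of C k \<xi> \<eta>] by simp

lemma A_eta_add: "A_eta A (\<eta> + g) = A_eta A \<eta> + A_eta A g"
  by (simp add: A_eta_def scaleR_add_left sum.distrib)

lemma A_eta_scaleR: "A_eta A (c *\<^sub>R \<eta>) = c *\<^sub>R A_eta A \<eta>"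
  by (simp add: A_eta_def scaleR_sum_right)

lemma A_eta_axis: "A_eta A (axis j 1) = A j"
  by (simp add: A_eta_def axis_def if_distrib[of "\<lambda>x. x *\<^sub>R _"] sum.delta cong: if_cong)

lemma A_eta_zero [simp]: "A_eta A 0 = 0"
  by (simp add: A_eta_def)

lemma transpose_A_eta:
  assumes "\<And>i. transpose (A i) = A i"
  shows "transpose (A_eta A \<eta>) = A_eta A \<eta>"
proof -
  have "A i $ j $ k = A i $ k $ j" for i j k
    using symmetric_matrix_entry[OF assms] .
  then show ?thesis
    by (simp add: A_eta_def transpose_def vec_eq_iff)
qed

section \<open>Consequences of the eikonal equation\<close>

definition normal_form ::
  "('q::finite \<Rightarrow> real^'p::finite^'p) \<Rightarrow> (('p + 'q) \<Rightarrow> ('p + 'q) \<Rightarrow> ('p + 'q) \<Rightarrow> ('p + 'q) \<Rightarrow> real)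
   \<Rightarrow> (real^'p) \<times> (real^'q) \<times> real \<Rightarrow> real" where
  "normal_form A C = (\<lambda>(\<xi>, \<eta>, t). t ^ 4 + 2 * (norm \<xi> ^ 2 - 3 * norm \<eta> ^ 2) * t ^ 2
                 + 8 * (\<xi> \<bullet> (A_eta A \<eta> *v \<xi>)) * t + quartic_form C \<xi> \<eta>)"

definition psi_grad_eta :: "('q::finite \<Rightarrow> real^'p::finite^'p) \<Rightarrow> real^'p \<Rightarrow> real^'q" where
  "psi_grad_eta A \<xi> = (\<chi> j. \<xi> \<bullet> (A j *v \<xi>))"

lemma normal_form_has_line_derivative:
  "((\<lambda>s. normal_form A C ((\<xi>, \<eta>, t) + s *\<^sub>R (h, g, \<tau>))) has_real_derivative
     4 * t^3 * \<tau> + (4 * (\<xi> \<bullet> h) - 12 * (\<eta> \<bullet> g)) * t^2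
     + 4 * (norm \<xi> ^ 2 - 3 * norm \<eta> ^ 2) * t * \<tau>
     + 8 * (h \<bullet> (A_eta A \<eta> *v \<xi>) + \<xi> \<bullet> (A_eta A \<eta> *v h) + \<xi> \<bullet> (A_eta A g *v \<xi>)) * t
     + 8 * (\<xi> \<bullet> (A_eta A \<eta> *v \<xi>)) * \<tau> + quartic_form_deriv C \<xi> \<eta> h g) (at 0)"
proof -
  define M where "M = A_eta A \<eta>"
  define N where "N = A_eta A g"
  have psi_line: "(\<xi> + s *\<^sub>R h) \<bullet> (A_eta A (\<eta> + s *\<^sub>R g) *v (\<xi> + s *\<^sub>R h))
     = \<xi> \<bullet> (M *v \<xi>) + s * (h \<bullet> (M *v \<xi>) + \<xi> \<bullet> (M *v h) + \<xi> \<bullet> (N *v \<xi>))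
       + s^2 * (h \<bullet> (M *v h) + h \<bullet> (N *v \<xi>) + \<xi> \<bullet> (N *v h)) + s^3 * (h \<bullet> (N *v h))" for s
    by (simp add: M_def N_def A_eta_add A_eta_scaleR scaleR_matrix_vector_mult matrix_vector_right_distrib
          matrix_vector_mult_add_rdistrib matrix_vector_mult_scaleR inner_add algebra_simps
          power2_eq_square power3_eq_cube)
  show ?thesis
    unfolding normal_form_def
    apply (simp add: norm_add_scaleR_sq psi_line)
    apply (rule derivative_eq_intros quartic_form_has_line_derivative refl | simp)+
    apply (simp add: M_def N_def dot_square_norm algebra_simps power2_eq_square power3_eq_cube)
    done
qed

locale eikonal_normal_form =
  fixes A :: "'q::finite \<Rightarrow> real^'p::finite^'p"
    and C :: "('p + 'q) \<Rightarrow> ('p + 'q) \<Rightarrow> ('p + 'q) \<Rightarrow> ('p + 'q) \<Rightarrow> real"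
  assumes A_symmetric: "transpose (A i) = A i"
    and eikonal: "\<exists>g. (normal_form A C has_derivative (\<lambda>h. g \<bullet> h)) (at x) \<and> norm g ^ 2 = 16 * norm x ^ 6"
begin

lemma gradient_norm_identity:
  "(4 * t^3 + 4 * (norm \<xi>^2 - 3 * norm \<eta>^2) * t + 8 * (\<xi> \<bullet> (A_eta A \<eta> *v \<xi>)))^2
   + norm (t^2 *\<^sub>R (4 *\<^sub>R \<xi>) + t *\<^sub>R (16 *\<^sub>R (A_eta A \<eta> *v \<xi>)) + grad_xi (quartic_form_deriv C) \<xi> \<eta>)^2
   + norm (t^2 *\<^sub>R (-12 *\<^sub>R \<eta>) + t *\<^sub>R (8 *\<^sub>R psi_grad_eta A \<xi>) + grad_eta (quartic_form_deriv C) \<xi> \<eta>)^2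
   = 16 * (norm \<xi>^2 + norm \<eta>^2 + t^2)^3"
proof -
  obtain g where g: "(normal_form A C has_derivative (\<lambda>h. g \<bullet> h)) (at (\<xi>, \<eta>, t))"
    and norm_g: "norm g ^ 2 = 16 * norm (\<xi>, \<eta>, t) ^ 6"
    using eikonal by blast
  obtain g1 g2 g3 where g_split: "g = (g1, g2, g3)"
    by (cases g) auto
  have dir: "g \<bullet> (h, k, \<tau>) = 4 * t^3 * \<tau> + (4 * (\<xi> \<bullet> h) - 12 * (\<eta> \<bullet> k)) * t^2
     + 4 * (norm \<xi> ^ 2 - 3 * norm \<eta> ^ 2) * t * \<tau>
     + 8 * (h \<bullet> (A_eta A \<eta> *v \<xi>) + \<xi> \<bullet> (A_eta A \<eta> *v h) + \<xi> \<bullet> (A_eta A k *v \<xi>)) * t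
     + 8 * (\<xi> \<bullet> (A_eta A \<eta> *v \<xi>)) * \<tau> + quartic_form_deriv C \<xi> \<eta> h k" for h k \<tau>
    using DERIV_unique[OF has_line_derivative_of_gradient[OF g] normal_form_has_line_derivative] by simp
  have "\<xi> \<bullet> (A_eta A \<eta> *v axis i 1) = (A_eta A \<eta> *v \<xi>) $ i" for i
    using inner_symmetric_matrix[OF transpose_A_eta[OF A_symmetric]]
    by (simp add: cart_eq_inner_axis inner_commute)
  then have "g1 = t^2 *\<^sub>R (4 *\<^sub>R \<xi>) + t *\<^sub>R (16 *\<^sub>R (A_eta A \<eta> *v \<xi>)) + grad_xi (quartic_form_deriv C) \<xi> \<eta>"
    using dir[of "axis _ 1" 0 0]
    by (simp add: vec_eq_iff g_split grad_xi_def inner_axis cart_eq_inner_axis[symmetric]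
        inner_commute[of "axis _ 1"] algebra_simps)
  moreover have "g2 = t^2 *\<^sub>R (-12 *\<^sub>R \<eta>) + t *\<^sub>R (8 *\<^sub>R psi_grad_eta A \<xi>) + grad_eta (quartic_form_deriv C) \<xi> \<eta>"
    using dir[of 0 "axis _ 1" 0]
    by (simp add: vec_eq_iff g_split grad_eta_def psi_grad_eta_def inner_axis A_eta_axis algebra_simps)
  moreover have "g3 = 4 * t^3 + 4 * (norm \<xi>^2 - 3 * norm \<eta>^2) * t + 8 * (\<xi> \<bullet> (A_eta A \<eta> *v \<xi>))"
    using dir[of 0 0 1] by (simp add: g_split)
  moreover have "norm g ^ 2 = g3^2 + norm g1^2 + norm g2^2"
    by (simp add: g_split norm_Pair)
  moreover have "norm (\<xi>, \<eta>, t) ^ 6 = (norm (\<xi>, \<eta>, t) ^ 2) ^ 3"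
    by (simp flip: power_mult)
  moreover have "norm (\<xi>, \<eta>, t) ^ 2 = norm \<xi>^2 + norm \<eta>^2 + t^2"
    by (simp add: norm_Pair)
  ultimately show ?thesis
    using norm_g by simp
qed

lemma eikonal_coeffs:
  fixes \<xi> :: "real^'p" and \<eta> :: "real^'q"
  defines "X \<equiv> A_eta A \<eta> *v \<xi>" and "\<omega> \<equiv> psi_grad_eta A \<xi>"
    and "Gx \<equiv> grad_xi (quartic_form_deriv C) \<xi> \<eta>" and "Ge \<equiv> grad_eta (quartic_form_deriv C) \<xi> \<eta>"
  shows "64 * (\<xi> \<bullet> X)^2 + norm Gx^2 + norm Ge^2 = 16 * (norm \<xi>^2 + norm \<eta>^2)^3"
    and "4 * (norm \<xi>^2 - 3 * norm \<eta>^2) * (\<xi> \<bullet> X) + 2 * (X \<bullet> Gx) + \<omega> \<bullet> Ge = 0"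
    and "2 * (norm \<xi>^2 - 3 * norm \<eta>^2)^2 + 32 * norm X^2 + 8 * norm \<omega>^2 + \<xi> \<bullet> Gx - 3 * (\<eta> \<bullet> Ge)
      = 6 * (norm \<xi>^2 + norm \<eta>^2)^2"
proof -
  note coeffs = sextic_identity_coeffs[OF gradient_norm_identity[of _ \<xi> \<eta>, unfolded norm_quadratic_poly_sq]]
  show "64 * (\<xi> \<bullet> X)^2 + norm Gx^2 + norm Ge^2 = 16 * (norm \<xi>^2 + norm \<eta>^2)^3"
    using coeffs(1) by (simp add: X_def Gx_def Ge_def power_mult_distrib)
  show "4 * (norm \<xi>^2 - 3 * norm \<eta>^2) * (\<xi> \<bullet> X) + 2 * (X \<bullet> Gx) + \<omega> \<bullet> Ge = 0"
    using coeffs(2) by (simp add: X_def \<omega>_def Gx_def Ge_def algebra_simps)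
  show "2 * (norm \<xi>^2 - 3 * norm \<eta>^2)^2 + 32 * norm X^2 + 8 * norm \<omega>^2 + \<xi> \<bullet> Gx - 3 * (\<eta> \<bullet> Ge)
      = 6 * (norm \<xi>^2 + norm \<eta>^2)^2"
    using coeffs(3) by (simp add: X_def \<omega>_def Gx_def Ge_def power_mult_distrib algebra_simps power2_eq_square)
qed

(* Replacing \<eta> by m \<eta> turns each coefficient identity into a polynomial identity in m
   whose coefficients separate the \<eta>-homogeneous parts. *)
lemma eta_part_0_2_3:
  shows "eta_part C 0 \<xi> \<eta> = norm \<xi>^4 - 2 * norm (psi_grad_eta A \<xi>)^2"
    and "eta_part C 2 \<xi> \<eta> = 8 * norm (A_eta A \<eta> *v \<xi>)^2 - 6 * norm \<xi>^2 * norm \<eta>^2"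
    and "eta_part C 3 \<xi> \<eta> = 0"
proof -
  define \<theta> where "\<theta> k = eta_part C k \<xi> \<eta>" for k
  define s r V W where "s = norm \<xi>^2" and "r = norm \<eta>^2"
    and "V = norm (A_eta A \<eta> *v \<xi>)^2" and "W = norm (psi_grad_eta A \<xi>)^2"
  have "(4 * \<theta> 0 - 4 * s^2 + 8 * W) + 0 * m + (32 * V - 24 * s * r - 4 * \<theta> 2) * m^2
      + (- 8 * \<theta> 3) * m^3 + (12 * r^2 - 12 * \<theta> 4) * m^4 + 0 * m^5 + 0 * m^6 = 0" for m
    using eikonal_coeffs(3)[of \<xi> "m *\<^sub>R \<eta>"]
    by (simp add: grad_quartic_form_deriv_scale_eta inner_add_right inner_grad_xi_eta_part
        inner_grad_eta_eta_part A_eta_scaleR scaleR_matrix_vector_mult power_mult_distrib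
        \<theta>_def s_def r_def V_def W_def algebra_simps power2_eq_square power3_eq_cube eval_nat_numeral)
  from poly6_eq_0_imp_coeffs_eq_0[OF this]
  show "eta_part C 0 \<xi> \<eta> = norm \<xi>^4 - 2 * norm (psi_grad_eta A \<xi>)^2"
    and "eta_part C 2 \<xi> \<eta> = 8 * norm (A_eta A \<eta> *v \<xi>)^2 - 6 * norm \<xi>^2 * norm \<eta>^2"
    and "eta_part C 3 \<xi> \<eta> = 0"
    by (simp_all add: \<theta>_def s_def r_def V_def W_def flip: power_mult)
qed

lemma grad_eta_eta_part_3: "grad_eta (eta_part_deriv C 3) \<xi> \<eta> = 0"
proof -
  have "((\<lambda>s. eta_part C 3 (\<xi> + s *\<^sub>R 0) (\<eta> + s *\<^sub>R g)) has_real_derivative 0) (at 0)" for g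
    by (simp add: eta_part_0_2_3(3))
  then have "eta_part_deriv C 3 \<xi> \<eta> 0 g = 0" for g
    using DERIV_unique eta_part_has_line_derivative by blast
  then show ?thesis
    by (simp add: grad_eta_def vec_eq_iff)
qed

lemma part31_grad_orthogonal: "(A_eta A \<eta> *v \<xi>) \<bullet> grad_xi (eta_part_deriv C 1) \<xi> \<eta> = 0"
proof -
  define a b where "a k = grad_xi (eta_part_deriv C k) \<xi> \<eta>" and "b k = grad_eta (eta_part_deriv C k) \<xi> \<eta>" for k
  define X \<omega> \<psi> s r where "X = A_eta A \<eta> *v \<xi>" and "\<omega> = psi_grad_eta A \<xi>" and "\<psi> = \<xi> \<bullet> X"
    and "s = norm \<xi>^2" and "r = norm \<eta>^2"
  have "\<omega> \<bullet> b 1 + (4 * s * \<psi> + 2 * (X \<bullet> a 0) + \<omega> \<bullet> b 2) * m + (2 * (X \<bullet> a 1)) * m^2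
      + (- 12 * r * \<psi> + 2 * (X \<bullet> a 2) + \<omega> \<bullet> b 4) * m^3 + (2 * (X \<bullet> a 3)) * m^4 + 0 * m^5 + 0 * m^6 = 0"
    for m
    using eikonal_coeffs(2)[of \<xi> "m *\<^sub>R \<eta>"]
    by (simp add: grad_quartic_form_deriv_scale_eta grad_eta_eta_part_3 inner_add_right A_eta_scaleR
        scaleR_matrix_vector_mult power_mult_distrib a_def b_def X_def \<omega>_def \<psi>_def s_def r_def)
      (simp add: algebra_simps power2_eq_square power3_eq_cube eval_nat_numeral)
  from poly6_eq_0_imp_coeffs_eq_0[OF this] show ?thesis
    by (simp add: a_def X_def)
qed

lemma eikonal_coeff_t0_m2:
  fixes \<xi> :: "real^'p" and \<eta> :: "real^'q"
  defines "a \<equiv> \<lambda>k. grad_xi (eta_part_deriv C k) \<xi> \<eta>" and "b \<equiv> \<lambda>k. grad_eta (eta_part_deriv C k) \<xi> \<eta>"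
  shows "64 * (\<xi> \<bullet> (A_eta A \<eta> *v \<xi>))^2 + norm (a 1)^2 + 2 * (a 0 \<bullet> a 2) + norm (b 2)^2
    + 2 * (b 1 \<bullet> b 3) = 48 * norm \<xi>^4 * norm \<eta>^2"
proof -
  define \<psi> s r where "\<psi> = \<xi> \<bullet> (A_eta A \<eta> *v \<xi>)" and "s = norm \<xi>^2" and "r = norm \<eta>^2"
  have "(norm (a 0)^2 + norm (b 1)^2 - 16 * s^3) + (2 * (a 0 \<bullet> a 1) + 2 * (b 1 \<bullet> b 2)) * m
      + (64 * \<psi>^2 + norm (a 1)^2 + 2 * (a 0 \<bullet> a 2) + norm (b 2)^2 + 2 * (b 1 \<bullet> b 3) - 48 * s^2 * r) * m^2
      + (2 * (a 0 \<bullet> a 3) + 2 * (a 1 \<bullet> a 2) + 2 * (b 1 \<bullet> b 4) + 2 * (b 2 \<bullet> b 3)) * m^3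
      + (norm (a 2)^2 + 2 * (a 1 \<bullet> a 3) + norm (b 3)^2 + 2 * (b 2 \<bullet> b 4) - 48 * s * r^2) * m^4
      + (2 * (a 2 \<bullet> a 3) + 2 * (b 3 \<bullet> b 4)) * m^5 + (norm (a 3)^2 + norm (b 4)^2 - 16 * r^3) * m^6 = 0"
    for m
    using eikonal_coeffs(1)[of \<xi> "m *\<^sub>R \<eta>"]
    unfolding grad_quartic_form_deriv_scale_eta norm_cubic_poly_sq
    by (simp add: A_eta_scaleR scaleR_matrix_vector_mult power_mult_distrib a_def b_def \<psi>_def s_def r_def)
      (simp add: algebra_simps power2_eq_square power3_eq_cube eval_nat_numeral)
  from poly6_eq_0_imp_coeffs_eq_0[OF this] show ?thesis
    by (simp add: \<psi>_def s_def r_def flip: power_mult)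
qed

lemma eta_part_2_deriv_at_kernel:
  assumes "A_eta A \<eta> *v z = 0"
  shows "eta_part_deriv C 2 z \<eta> h 0 = -12 * norm \<eta>^2 * (z \<bullet> h)"
    and "eta_part_deriv C 2 z \<eta> 0 g = -12 * norm z^2 * (\<eta> \<bullet> g)"
proof -
  have "(\<lambda>s. eta_part C 2 (z + s *\<^sub>R h) (\<eta> + s *\<^sub>R 0)) = (\<lambda>s.
    8 * s^2 * norm (A_eta A \<eta> *v h)^2 - 6 * (norm z^2 + 2 * s * (z \<bullet> h) + s^2 * norm h^2) * norm \<eta>^2)"
    by (simp add: fun_eq_iff eta_part_0_2_3(2) norm_add_scaleR_sq matrix_vector_right_distrib
        matrix_vector_mult_scaleR assms power_mult_distrib)
  then have "((\<lambda>s. eta_part C 2 (z + s *\<^sub>R h) (\<eta> + s *\<^sub>R 0))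
    has_real_derivative -12 * norm \<eta>^2 * (z \<bullet> h)) (at 0)"
    by (auto intro!: derivative_eq_intros)
  from DERIV_unique[OF eta_part_has_line_derivative this]
  show "eta_part_deriv C 2 z \<eta> h 0 = -12 * norm \<eta>^2 * (z \<bullet> h)" .
  have "(\<lambda>s. eta_part C 2 (z + s *\<^sub>R 0) (\<eta> + s *\<^sub>R g)) = (\<lambda>s.
    8 * s^2 * norm (A_eta A g *v z)^2 - 6 * norm z^2 * (norm \<eta>^2 + 2 * s * (\<eta> \<bullet> g) + s^2 * norm g^2))"
    by (simp add: fun_eq_iff eta_part_0_2_3(2) norm_add_scaleR_sq A_eta_add A_eta_scaleR
        matrix_vector_mult_add_rdistrib scaleR_matrix_vector_mult assms power_mult_distrib)
  then have "((\<lambda>s. eta_part C 2 (z + s *\<^sub>R 0) (\<eta> + s *\<^sub>R g))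
    has_real_derivative -12 * norm z^2 * (\<eta> \<bullet> g)) (at 0)"
    by (auto intro!: derivative_eq_intros)
  from DERIV_unique[OF eta_part_has_line_derivative this]
  show "eta_part_deriv C 2 z \<eta> 0 g = -12 * norm z^2 * (\<eta> \<bullet> g)" .
qed

lemma part31_grad_at_kernel:
  assumes kernel: "A_eta A \<eta> *v z = 0"
  shows "grad_xi (eta_part_deriv C 1) z \<eta> = 0"
proof -
  define a b where "a k = grad_xi (eta_part_deriv C k) z \<eta>" and "b k = grad_eta (eta_part_deriv C k) z \<eta>" for k
  define s r W where "s = norm z^2" and "r = norm \<eta>^2" and "W = norm (psi_grad_eta A z)^2"
  have a2: "a 2 = (-12 * r) *\<^sub>R z"
    by (simp add: vec_eq_iff a_def r_def grad_xi_def eta_part_2_deriv_at_kernel(1)[OF kernel] inner_axis)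
  have b2: "b 2 = (-12 * s) *\<^sub>R \<eta>"
    by (simp add: vec_eq_iff b_def s_def grad_eta_def eta_part_2_deriv_at_kernel(2)[OF kernel] inner_axis)
  have b3: "b 3 = 0"
    by (simp add: b_def grad_eta_eta_part_3)
  have "a 0 \<bullet> z = 4 * (s^2 - 2 * W)"
    using inner_grad_xi_eta_part[of z C 0 \<eta>]
    by (simp add: a_def inner_commute eta_part_0_2_3(1) s_def W_def flip: power_mult)
  then have "norm (a 1)^2 = -192 * r * W"
    using eikonal_coeff_t0_m2[of z \<eta>]
    unfolding a_def[symmetric] b_def[symmetric]
    by (simp add: kernel a2 b2 b3 power_mult_distrib s_def r_def)
      (simp add: algebra_simps power2_eq_square)
  moreover have "0 \<le> r * W"
    by (simp add: r_def W_def)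
  ultimately have "norm (a 1)^2 = 0"
    using zero_le_power2[of "norm (a 1)"] by linarith
  then show ?thesis
    by (simp add: a_def)
qed

end

section \<open>The polarisation of \<open>\<theta>\<^sub>3\<close>\<close>

definition part31_term ::
  "(('p::finite + 'q::finite) \<Rightarrow> ('p + 'q) \<Rightarrow> ('p + 'q) \<Rightarrow> ('p + 'q) \<Rightarrow> real)
   \<Rightarrow> real^'q \<Rightarrow> real^'p \<Rightarrow> real^'p \<Rightarrow> real^'p
   \<Rightarrow> ('p + 'q) \<Rightarrow> ('p + 'q) \<Rightarrow> ('p + 'q) \<Rightarrow> ('p + 'q) \<Rightarrow> real"
  where
  "part31_term C \<eta> u v w a b c d = (if n_eta [a, b, c, d] = 1 then C a b c d *
     (joint 0 \<eta> a * joint u 0 b * joint v 0 c * joint w 0 d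
    + joint u 0 a * joint 0 \<eta> b * joint v 0 c * joint w 0 d
    + joint u 0 a * joint v 0 b * joint 0 \<eta> c * joint w 0 d
    + joint u 0 a * joint v 0 b * joint w 0 c * joint 0 \<eta> d) else 0)"

definition part31_trilinear where
  "part31_trilinear C \<eta> u v w =
     (\<Sum>a\<in>UNIV. \<Sum>b\<in>UNIV. \<Sum>c\<in>UNIV. \<Sum>d\<in>UNIV. part31_term C \<eta> u v w a b c d)"

definition part31_polar where
  "part31_polar C \<eta> u v w = part31_trilinear C \<eta> u v w + part31_trilinear C \<eta> u w v
     + part31_trilinear C \<eta> v u w + part31_trilinear C \<eta> v w u
     + part31_trilinear C \<eta> w u v + part31_trilinear C \<eta> w v u"

lemma joint_add_xi: "joint (u + u') (0::real^'q) a = joint u 0 a + joint u' 0 a"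
  by (cases a) (auto simp: joint_def)

lemma joint_scaleR_xi: "joint (r *\<^sub>R u) (0::real^'q) a = r * joint u 0 a"
  by (cases a) (auto simp: joint_def)

lemma linear_part31_term:
  "linear (\<lambda>u. part31_term C \<eta> u v w a b c d)"
  "linear (\<lambda>v. part31_term C \<eta> u v w a b c d)"
  "linear (\<lambda>w. part31_term C \<eta> u v w a b c d)"
  by (cases "n_eta [a, b, c, d] = 1";
      intro linearI; simp add: part31_term_def joint_add_xi joint_scaleR_xi algebra_simps)+

lemma linear_part31_trilinear:
  "linear (\<lambda>u. part31_trilinear C \<eta> u v w)"
  "linear (\<lambda>v. part31_trilinear C \<eta> u v w)"
  "linear (\<lambda>w. part31_trilinear C \<eta> u v w)"
  unfolding part31_trilinear_def by (intro linear_compose_sum ballI linear_part31_term)+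

lemma sym_trilinear_part31_polar: "sym_trilinear (part31_polar C \<eta>)"
proof (rule sym_trilinear.intro)
  show "linear (\<lambda>u. part31_polar C \<eta> u v w)" for v w
    unfolding part31_polar_def by (intro linear_compose_add linear_part31_trilinear)
qed (simp_all add: part31_polar_def algebra_simps)

lemma eta_part_1_eq_part31_trilinear: "eta_part C 1 \<xi> \<eta> = part31_trilinear C \<eta> \<xi> \<xi> \<xi>"
  unfolding eta_part_def part31_trilinear_def
  apply (intro sum.cong refl)
  subgoal for a b c d
    by (cases a; cases b; cases c; cases d) (simp_all add: part31_term_def joint_def n_eta_def)
  done

lemma eta_part_1_deriv_eq_part31_polar:
  "eta_part_deriv C 1 \<xi> \<eta> h 0 = part31_polar C \<eta> h \<xi> \<xi> / 2"
proof -
  have "eta_part_deriv C 1 \<xi> \<eta> h 0 =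
    part31_trilinear C \<eta> h \<xi> \<xi> + part31_trilinear C \<eta> \<xi> h \<xi> + part31_trilinear C \<eta> \<xi> \<xi> h"
    unfolding eta_part_deriv_def part31_trilinear_def sum.distrib[symmetric]
    apply (intro sum.cong refl)
    subgoal for a b c d
      by (cases a; cases b; cases c; cases d)
        (simp_all add: part31_term_def monomial_deriv_def joint_def n_eta_def algebra_simps)
    done
  then show ?thesis
    by (simp add: part31_polar_def)
qed

lemma part31_polar_eta_zero: "part31_polar C 0 u v w = 0"
proof -
  have "part31_term C 0 u v w a b c d = 0" for u v w a b c d
    by (cases a; cases b; cases c; cases d) (simp_all add: part31_term_def joint_def)
  then show ?thesis
    by (simp add: part31_polar_def part31_trilinear_def)
qed

lemma laplacian_part31:
  "laplacian (\<lambda>\<zeta>. part31 C \<zeta> \<eta>) \<xi> = (\<Sum>i\<in>UNIV. part31_polar C \<eta> (axis i 1) (axis i 1) \<xi>)"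
proof -
  interpret sym_trilinear "part31_polar C \<eta>"
    by (rule sym_trilinear_part31_polar)
  have cubic: "part31 C \<zeta> \<eta> = part31_polar C \<eta> \<zeta> \<zeta> \<zeta> / 6" for \<zeta>
    unfolding part31_eq_eta_part eta_part_1_eq_part31_trilinear part31_polar_def by simp
  have line: "(\<lambda>r. part31 C (\<xi> + r *\<^sub>R e) \<eta>) = (\<lambda>r. part31_polar C \<eta> \<xi> \<xi> \<xi> / 6
      + (part31_polar C \<eta> e \<xi> \<xi> / 2) * r + (part31_polar C \<eta> e e \<xi> / 2) * r^2
      + (part31_polar C \<eta> e e e / 6) * r^3)" for e
    by (simp add: cubic cube_line fun_eq_iff algebra_simps)
  show ?thesis
    unfolding laplacian_def line deriv2_cubic_poly by simp
qed

context eikonal_normal_form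
begin

lemma part31_polar_eq_grad: "part31_polar C \<eta> h x x = 2 * (h \<bullet> grad_xi (eta_part_deriv C 1) x \<eta>)"
  using eta_part_1_deriv_eq_part31_polar[of C x \<eta> h] eta_part_deriv_xi_linear[of C 1 x \<eta> h] by simp

lemma laplacian_part31_eq_0:
  assumes tripotent: "\<And>x. A_eta A \<eta> *v (A_eta A \<eta> *v (A_eta A \<eta> *v x)) = norm \<eta>^2 *\<^sub>R (A_eta A \<eta> *v x)"
  shows "laplacian (\<lambda>\<zeta>. part31 C \<zeta> \<eta>) \<xi> = 0"
proof (cases "\<eta> = 0")
  case True
  then show ?thesis
    by (simp add: laplacian_part31 part31_polar_eta_zero)
next
  case False
  interpret sym_trilinear "part31_polar C \<eta>"
    by (rule sym_trilinear_part31_polar)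
  define B where "B = (1 / norm \<eta>) *\<^sub>R A_eta A \<eta>"
  have B_apply: "B *v x = (1 / norm \<eta>) *\<^sub>R (A_eta A \<eta> *v x)" for x
    by (simp add: B_def scaleR_matrix_vector_mult)
  have "transpose B = B"
    by (simp add: B_def transpose_scalar transpose_A_eta A_symmetric)
  moreover have "B *v (B *v (B *v x)) = B *v x" for x
    using False by (simp add: B_apply matrix_vector_mult_scaleR tripotent power2_eq_square)
  moreover have "part31_polar C \<eta> (B *v x) x x = 0" for x
    using False part31_grad_orthogonal[of \<eta> x] by (simp add: part31_polar_eq_grad B_apply)
  moreover have "part31_polar C \<eta> h z z = 0" if "B *v z = 0" for h z
    using that False part31_grad_at_kernel[of \<eta> z] by (simp add: part31_polar_eq_grad B_apply)
  ultimately show ?thesis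
    by (simp add: laplacian_part31 trace_eq_0_if_tripotent)
qed

end

theorem proposition3p5:
  fixes A :: "'q::finite \<Rightarrow> real^'p::finite^'p"
    and C :: "('p + 'q) \<Rightarrow> ('p + 'q) \<Rightarrow> ('p + 'q) \<Rightarrow> ('p + 'q) \<Rightarrow> real"
    and \<nu> :: nat
    and f :: "(real^'p) \<times> (real^'q) \<times> real \<Rightarrow> real"
  assumes q2: "CARD('q) \<ge> 2"
    and symm: "\<forall>i. transpose (A i) = A i"
    and spec: "\<forall>\<eta>::real^'q. \<eta> \<noteq> 0 \<longrightarrow>
      (\<exists>D. diagonal_matrix D
         \<and> (\<forall>i. D $ i $ i \<in> {norm \<eta>, - norm \<eta>, 0})
         \<and> card {i. D $ i $ i = norm \<eta>} = \<nu>
         \<and> card {i. D $ i $ i = - norm \<eta>} = \<nu>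
         \<and> similar_matrix (A_eta A \<eta>) D)"
    and f_def: "f = (\<lambda>(\<xi>, \<eta>, t). t ^ 4 + 2 * (norm \<xi> ^ 2 - 3 * norm \<eta> ^ 2) * t ^ 2
                 + 8 * (\<xi> \<bullet> (A_eta A \<eta> *v \<xi>)) * t + quartic_form C \<xi> \<eta>)"
    and eikonal: "\<forall>x. \<exists>g. (f has_derivative (\<lambda>h. g \<bullet> h)) (at x)
                          \<and> norm g ^ 2 = 16 * norm x ^ 6"
  shows "\<forall>\<xi> \<eta>. laplacian (\<lambda>\<zeta>. part31 C \<zeta> \<eta>) \<xi> = 0"
proof (intro allI)
  fix \<xi> :: "real^'p" and \<eta> :: "real^'q"
  interpret eikonal_normal_form A C
    using symm eikonal unfolding f_def normal_form_def[symmetric] by unfold_locales auto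
  have "A_eta A \<eta> *v (A_eta A \<eta> *v (A_eta A \<eta> *v x)) = norm \<eta>^2 *\<^sub>R (A_eta A \<eta> *v x)" for x
  proof (cases "\<eta> = 0")
    case False
    then obtain D where "diagonal_matrix D" "\<forall>i. D $ i $ i \<in> {norm \<eta>, - norm \<eta>, 0}"
      "similar_matrix (A_eta A \<eta>) D"
      using spec by blast
    then show ?thesis
      by (rule similar_diagonal_cube)
  qed simp
  then show "laplacian (\<lambda>\<zeta>. part31 C \<zeta> \<eta>) \<xi> = 0"
    by (rule laplacian_part31_eq_0)
qed

end
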